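(* Let $(M^n,g)$ be a Riemannian manifold with Levi-Civita connection $\nabla$. Suppose either (i) $M$ is nearly conformally symmetric, i.e. $$\nabla_aR_{bc} - \nabla_b R_{ac} = \frac{1}{2(n-1)}[g_{bc}\nabla_a R - g_{ac}\nabla_{b}R],$$ or (ii) $M$ carries a $(1,3)$-tensor field $K$ satisfying $\nabla_m K_{bce}{}^m = A\, \nabla_m R_{bce}{}^m + B\,(a_{be}\nabla_c \varphi- a_{ce}\nabla_b\varphi)$ (with nonzero constants $A,B$, a smooth function $\varphi$ and a symmetric Codazzi tensor $a_{bc}$) and such that $\nabla_m K_{bce}{}^m=0$ (in particular if $K=0$ or $\nabla_a K_{bcd}{}^e=0$). Then $$R_{am}R_{bce}{}^m + R_{bm}R_{cae}{}^m+ R_{cm}R_{abe}{}^m =0$$ and $$R_{am} R_{bec}{}^m - R_{bm}R_{ace}{}^m + R_{cm} R_{eba}{}^m -R_{em} R_{cab}{}^m =0 .$$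
   Context: Abstract index notation with Einstein summation. $R_{abc}{}^d = \partial_a \Gamma_{bc}^d - \partial_b\Gamma_{ac}^d - \Gamma_{ac}^k\Gamma_{bk}^d + \Gamma_{ak}^d \Gamma_{bc}^k$, Ricci tensor $R_{ac}=R_{abc}{}^b$, scalar curvature $R=g^{ac}R_{ac}$. A Codazzi tensor is a symmetric $(0,2)$ tensor with $\nabla_b a_{cd}=\nabla_c a_{bd}$. *)

theory Defs
  imports "HOL-Analysis.Analysis"
begin

text \<open>Local coordinate formulation: an open set U of real^'n (a chart of M^n,
 n = CARD('n)) carrying a smooth Riemannian metric g. Tensor fields are given
 by their component functions; all index sums run over the finite type 'n.\<close>

definition pd :: "'n::finite \<Rightarrow> (real^'n \<Rightarrow> real) \<Rightarrow> real^'n \<Rightarrow> real" where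
  "pd a f x = frechet_derivative f (at x) (axis a 1)"

fun iter_pd :: "'n::finite list \<Rightarrow> (real^'n \<Rightarrow> real) \<Rightarrow> real^'n \<Rightarrow> real" where
  "iter_pd [] f = f"
| "iter_pd (a # as) f = pd a (iter_pd as f)"

definition smooth_on :: "(real^'n::finite) set \<Rightarrow> (real^'n \<Rightarrow> real) \<Rightarrow> bool" where
  "smooth_on U f \<longleftrightarrow> (\<forall>as. iter_pd as f differentiable_on U)"

definition riemannian_metric :: "(real^'n::finite) set \<Rightarrow> (real^'n \<Rightarrow> 'n \<Rightarrow> 'n \<Rightarrow> real) \<Rightarrow> bool" where
  "riemannian_metric U g \<longleftrightarrow> open U \<and>
     (\<forall>i j. smooth_on U (\<lambda>x. g x i j)) \<and>
     (\<forall>x\<in>U. \<forall>i j. g x i j = g x j i) \<and>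
     (\<forall>x\<in>U. \<forall>v::real^'n. v \<noteq> 0 \<longrightarrow> (\<Sum>i\<in>UNIV. \<Sum>j\<in>UNIV. g x i j * v$i * v$j) > 0)"

definition ginv :: "(real^'n::finite \<Rightarrow> 'n \<Rightarrow> 'n \<Rightarrow> real) \<Rightarrow> real^'n \<Rightarrow> 'n \<Rightarrow> 'n \<Rightarrow> real" where
  "ginv g x i j = matrix_inv (\<chi> k l. g x k l) $ i $ j"

definition Chr :: "(real^'n::finite \<Rightarrow> 'n \<Rightarrow> 'n \<Rightarrow> real) \<Rightarrow> real^'n \<Rightarrow> 'n \<Rightarrow> 'n \<Rightarrow> 'n \<Rightarrow> real" where
  "Chr g x b c d = (1/2) * (\<Sum>k\<in>UNIV. ginv g x d k *
       (pd b (\<lambda>y. g y c k) x + pd c (\<lambda>y. g y b k) x - pd k (\<lambda>y. g y b c) x))"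

definition Riem :: "(real^'n::finite \<Rightarrow> 'n \<Rightarrow> 'n \<Rightarrow> real) \<Rightarrow> real^'n \<Rightarrow> 'n \<Rightarrow> 'n \<Rightarrow> 'n \<Rightarrow> 'n \<Rightarrow> real" where
  "Riem g x a b c d = pd a (\<lambda>y. Chr g y b c d) x - pd b (\<lambda>y. Chr g y a c d) x
     - (\<Sum>k\<in>UNIV. Chr g x a c k * Chr g x b k d) + (\<Sum>k\<in>UNIV. Chr g x a k d * Chr g x b c k)"

definition Ricci :: "(real^'n::finite \<Rightarrow> 'n \<Rightarrow> 'n \<Rightarrow> real) \<Rightarrow> real^'n \<Rightarrow> 'n \<Rightarrow> 'n \<Rightarrow> real" where
  "Ricci g x a c = (\<Sum>b\<in>UNIV. Riem g x a b c b)"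

definition scal :: "(real^'n::finite \<Rightarrow> 'n \<Rightarrow> 'n \<Rightarrow> real) \<Rightarrow> real^'n \<Rightarrow> real" where
  "scal g x = (\<Sum>a\<in>UNIV. \<Sum>c\<in>UNIV. ginv g x a c * Ricci g x a c)"

definition cov02 :: "(real^'n::finite \<Rightarrow> 'n \<Rightarrow> 'n \<Rightarrow> real) \<Rightarrow> (real^'n \<Rightarrow> 'n \<Rightarrow> 'n \<Rightarrow> real)
     \<Rightarrow> real^'n \<Rightarrow> 'n \<Rightarrow> 'n \<Rightarrow> 'n \<Rightarrow> real" where
  "cov02 g T x a b c = pd a (\<lambda>y. T y b c) x
     - (\<Sum>k\<in>UNIV. Chr g x a b k * T x k c) - (\<Sum>k\<in>UNIV. Chr g x a c k * T x b k)"

definition cov13 :: "(real^'n::finite \<Rightarrow> 'n \<Rightarrow> 'n \<Rightarrow> real)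
     \<Rightarrow> (real^'n \<Rightarrow> 'n \<Rightarrow> 'n \<Rightarrow> 'n \<Rightarrow> 'n \<Rightarrow> real)
     \<Rightarrow> real^'n \<Rightarrow> 'n \<Rightarrow> 'n \<Rightarrow> 'n \<Rightarrow> 'n \<Rightarrow> 'n \<Rightarrow> real" where
  "cov13 g K x a b c e d = pd a (\<lambda>y. K y b c e d) x
     - (\<Sum>k\<in>UNIV. Chr g x a b k * K x k c e d) - (\<Sum>k\<in>UNIV. Chr g x a c k * K x b k e d)
     - (\<Sum>k\<in>UNIV. Chr g x a e k * K x b c k d) + (\<Sum>k\<in>UNIV. Chr g x a k d * K x b c e k)"

definition div13 :: "(real^'n::finite \<Rightarrow> 'n \<Rightarrow> 'n \<Rightarrow> real)
     \<Rightarrow> (real^'n \<Rightarrow> 'n \<Rightarrow> 'n \<Rightarrow> 'n \<Rightarrow> 'n \<Rightarrow> real)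
     \<Rightarrow> real^'n \<Rightarrow> 'n \<Rightarrow> 'n \<Rightarrow> 'n \<Rightarrow> real" where
  "div13 g K x b c e = (\<Sum>m\<in>UNIV. cov13 g K x m b c e m)"

definition nearly_conformally_symmetric ::
    "(real^'n::finite) set \<Rightarrow> (real^'n \<Rightarrow> 'n \<Rightarrow> 'n \<Rightarrow> real) \<Rightarrow> bool" where
  "nearly_conformally_symmetric U g \<longleftrightarrow>
    (\<forall>x\<in>U. \<forall>a b c. cov02 g (Ricci g) x a b c - cov02 g (Ricci g) x b a c
        = 1 / (2 * (real CARD('n) - 1)) * (g x b c * pd a (scal g) x - g x a c * pd b (scal g) x))"

definition codazzi :: "(real^'n::finite) set \<Rightarrow> (real^'n \<Rightarrow> 'n \<Rightarrow> 'n \<Rightarrow> real)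
     \<Rightarrow> (real^'n \<Rightarrow> 'n \<Rightarrow> 'n \<Rightarrow> real) \<Rightarrow> bool" where
  "codazzi U g t \<longleftrightarrow> (\<forall>i j. smooth_on U (\<lambda>x. t x i j)) \<and>
     (\<forall>x\<in>U. \<forall>i j. t x i j = t x j i) \<and>
     (\<forall>x\<in>U. \<forall>b c d. cov02 g t x b c d = cov02 g t x c b d)"

end

theory Submission
  imports Defs
begin

(*
  Write D_{abe} = \<nabla>_a R_{be} for the covariant derivative of the Ricci tensor and
  C_{abe} = D_{abe} - D_{bae} for its Cotton-type antisymmetrisation (ricci_cotton).
  The proof works pointwise in the chart U and has four steps.
  (1) Both hypotheses force C to be a "gradient wedge" c (p_{ae} \<nabla>_b q - p_{be} \<nabla>_a q)
      with p a Codazzi tensor and q a smooth function: in case (i) p = g (a Codazzi tensor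
      because \<nabla>g = 0) and q = R; in case (ii) the contracted second Bianchi identity
      \<nabla>_m R_{bce}^m = -C_{bce} turns the divergence condition into C = (B/A)(t \<and> d\<phi>).
  (2) For a gradient wedge the cyclic sum \<nabla>_c C_{abe} + \<nabla>_a C_{bce} + \<nabla>_b C_{cae} vanishes,
      by the Codazzi property of p and the symmetry of the Hessian of q.
  (3) By the Ricci identity for the Ricci tensor and the first Bianchi identity this cyclic
      sum equals minus R_{am} R_{bce}^m + R_{bm} R_{cae}^m + R_{cm} R_{abe}^m, which gives
      the first identity; the second one is an algebraic consequence of the first.
*)

section \<open>Partial derivatives\<close>

lemmas has_frechet_derivative = frechet_derivative_works[THEN iffD1]

lemma pd_has_derivative: "(f has_derivative F) (at x) \<Longrightarrow> pd a f x = F (axis a 1)"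
  unfolding pd_def using frechet_derivative_at by metis

lemma pd_local:
  assumes "open U" "x \<in> U" "\<And>y. y \<in> U \<Longrightarrow> f y = h y"
  shows "pd a f x = pd a h x"
proof -
  have "\<And>F. (f has_derivative F) (at x) \<longleftrightarrow> (h has_derivative F) (at x)"
    using has_derivative_transform_within_open assms by metis
  then show ?thesis unfolding pd_def frechet_derivative_def by simp
qed

lemma pd_add: "f differentiable (at x) \<Longrightarrow> h differentiable (at x) \<Longrightarrow>
   pd a (\<lambda>y. f y + h y) x = pd a f x + pd a h x"
  using pd_has_derivative[OF has_derivative_add[OF has_frechet_derivative has_frechet_derivative]]
  by (simp add: pd_def)

lemma pd_diff: "f differentiable (at x) \<Longrightarrow> h differentiable (at x) \<Longrightarrow>
   pd a (\<lambda>y. f y - h y) x = pd a f x - pd a h x"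
  using pd_has_derivative[OF has_derivative_diff[OF has_frechet_derivative has_frechet_derivative]]
  by (simp add: pd_def)

lemma pd_minus: "f differentiable (at x) \<Longrightarrow> pd a (\<lambda>y. - f y) x = - pd a f x"
  using pd_has_derivative[OF has_derivative_minus[OF has_frechet_derivative]] by (simp add: pd_def)

lemma pd_mult: "f differentiable (at x) \<Longrightarrow> h differentiable (at x) \<Longrightarrow>
   pd a (\<lambda>y. f y * h y) x = pd a f x * h x + f x * pd a h x"
  using pd_has_derivative[OF has_derivative_mult[OF has_frechet_derivative has_frechet_derivative]]
  by (simp add: pd_def algebra_simps)

lemma pd_const: "pd a (\<lambda>y. c) x = 0"
  using pd_has_derivative[of "\<lambda>y. c" "\<lambda>h. 0" x a] by simp

lemma pd_sum: "finite S \<Longrightarrow> (\<And>i. i \<in> S \<Longrightarrow> f i differentiable (at x)) \<Longrightarrow>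
   pd a (\<lambda>y. \<Sum>i\<in>S. f i y) x = (\<Sum>i\<in>S. pd a (f i) x)"
proof (induction S rule: finite_induct)
  case empty then show ?case by (simp add: pd_const)
next
  case (insert j S)
  have "(\<lambda>y. \<Sum>i\<in>S. f i y) differentiable (at x)"
    using insert by (intro differentiable_sum) auto
  then show ?case using insert by (simp add: pd_add)
qed

lemma pd_inverse: "f differentiable (at x) \<Longrightarrow> f x \<noteq> 0 \<Longrightarrow>
   pd a (\<lambda>y. inverse (f y)) x = - (inverse (f x) * pd a f x * inverse (f x))"
  by (rule pd_has_derivative[OF Deriv.has_derivative_inverse[OF _ has_frechet_derivative],
        simplified pd_def[symmetric]])

lemmas pd_rules = pd_add pd_diff pd_mult pd_sum pd_const pd_minus

section \<open>Smooth functions\<close>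

lemma iter_pd_append: "iter_pd (as @ [a]) f = iter_pd as (pd a f)"
  by (induction as) auto

lemma smooth_pd: "smooth_on U f \<Longrightarrow> smooth_on U (pd a f)"
  unfolding smooth_on_def by (metis iter_pd_append)

lemma smooth_differentiable_on: "smooth_on U f \<Longrightarrow> f differentiable_on U"
  unfolding smooth_on_def by (metis iter_pd.simps(1))

text \<open>To show that smooth functions form an algebra closed under inverses and local
  agreement, we consider the smallest class with these closure properties and show that
  it consists of differentiable functions and is closed under partial derivatives.\<close>
inductive smooth_gen :: "(real^'n::finite) set \<Rightarrow> (real^'n \<Rightarrow> real) \<Rightarrow> bool" for U where
  sg_base: "smooth_on U f \<Longrightarrow> smooth_gen U f"
| sg_const: "smooth_gen U (\<lambda>x. c)"
| sg_add: "smooth_gen U f \<Longrightarrow> smooth_gen U h \<Longrightarrow> smooth_gen U (\<lambda>x. f x + h x)"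
| sg_mult: "smooth_gen U f \<Longrightarrow> smooth_gen U h \<Longrightarrow> smooth_gen U (\<lambda>x. f x * h x)"
| sg_inverse: "smooth_gen U f \<Longrightarrow> (\<forall>x\<in>U. f x \<noteq> 0) \<Longrightarrow> smooth_gen U (\<lambda>x. inverse (f x))"
| sg_cong: "smooth_gen U f \<Longrightarrow> (\<forall>x\<in>U. f x = h x) \<Longrightarrow> smooth_gen U h"

lemma smooth_gen_props:
  assumes "open U" "smooth_gen U f"
  shows "f differentiable_on U \<and> (\<forall>a. smooth_gen U (pd a f))"
  using assms(2)
proof (induction rule: smooth_gen.induct)
  case (sg_base f)
  then show ?case by (simp add: smooth_differentiable_on smooth_pd smooth_gen.sg_base)
next
  case (sg_const c)
  have "smooth_gen U (pd a (\<lambda>x. c))" for a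
    by (rule smooth_gen.sg_cong[OF smooth_gen.sg_const[of U 0]]) (simp add: pd_const)
  then show ?case by auto
next
  case (sg_add f h)
  have d: "x \<in> U \<Longrightarrow> f differentiable (at x) \<and> h differentiable (at x)" for x
    using sg_add assms(1) differentiable_on_eq_differentiable_at by blast
  have "smooth_gen U (pd a (\<lambda>x. f x + h x))" for a
  proof (rule smooth_gen.sg_cong)
    show "smooth_gen U (\<lambda>x. pd a f x + pd a h x)" using sg_add by (intro smooth_gen.sg_add) auto
    show "\<forall>x\<in>U. pd a f x + pd a h x = pd a (\<lambda>x. f x + h x) x" using d by (simp add: pd_add)
  qed
  then show ?case using sg_add by (auto intro: differentiable_on_add)
next
  case (sg_mult f h)
  have d: "x \<in> U \<Longrightarrow> f differentiable (at x) \<and> h differentiable (at x)" for x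
    using sg_mult assms(1) differentiable_on_eq_differentiable_at by blast
  have "smooth_gen U (pd a (\<lambda>x. f x * h x))" for a
  proof (rule smooth_gen.sg_cong)
    show "smooth_gen U (\<lambda>x. pd a f x * h x + f x * pd a h x)"
      using sg_mult by (intro smooth_gen.sg_add smooth_gen.sg_mult) auto
    show "\<forall>x\<in>U. pd a f x * h x + f x * pd a h x = pd a (\<lambda>x. f x * h x) x"
      using d by (simp add: pd_mult)
  qed
  then show ?case using sg_mult by (auto intro: differentiable_on_mult)
next
  case (sg_inverse f)
  have d: "x \<in> U \<Longrightarrow> f differentiable (at x)" for x
    using sg_inverse assms(1) differentiable_on_eq_differentiable_at by blast
  have "smooth_gen U (pd a (\<lambda>x. inverse (f x)))" for a
  proof (rule smooth_gen.sg_cong)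
    show "smooth_gen U (\<lambda>x. -1 * inverse (f x) * pd a f x * inverse (f x))"
      using sg_inverse by (intro smooth_gen.sg_mult smooth_gen.sg_const smooth_gen.sg_inverse) auto
    show "\<forall>x\<in>U. -1 * inverse (f x) * pd a f x * inverse (f x) = pd a (\<lambda>x. inverse (f x)) x"
      using d sg_inverse by (simp add: pd_inverse)
  qed
  then show ?case using sg_inverse by (auto intro!: differentiable_on_inverse)
next
  case (sg_cong f h)
  have "smooth_gen U (pd a h)" for a
    by (rule smooth_gen.sg_cong[OF conjunct2[OF sg_cong.IH, rule_format, of a]])
      (use sg_cong assms(1) in \<open>auto intro: pd_local\<close>)
  moreover have "h differentiable_on U"
    unfolding differentiable_on_eq_differentiable_at[OF assms(1)]
  proof
    fix x assume x: "x \<in> U"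
    then have "f differentiable at x"
      using sg_cong assms(1) differentiable_on_eq_differentiable_at by blast
    then obtain F where "(f has_derivative F) (at x)" unfolding differentiable_def by blast
    then have "(h has_derivative F) (at x)"
      by (rule has_derivative_transform_within_open[OF _ assms(1) x]) (use sg_cong in auto)
    then show "h differentiable at x" unfolding differentiable_def by blast
  qed
  ultimately show ?case by auto
qed

lemma smooth_gen_iff: "open U \<Longrightarrow> smooth_gen U f \<longleftrightarrow> smooth_on U f"
proof
  assume U: "open U" and f: "smooth_gen U f"
  have "smooth_gen U (iter_pd as f)" for as
    by (induction as) (use U f smooth_gen_props in auto)
  then show "smooth_on U f" unfolding smooth_on_def using smooth_gen_props U by blast
qed (rule sg_base)

context
  fixes U :: "(real^'n::finite) set"
  assumes U: "open U"
begin

lemma smooth_differentiable: "smooth_on U f \<Longrightarrow> x \<in> U \<Longrightarrow> f differentiable (at x)"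
  using smooth_differentiable_on U differentiable_on_eq_differentiable_at by blast

lemma smooth_const: "smooth_on U (\<lambda>x. c)"
  using sg_const smooth_gen_iff[OF U] by blast

lemma smooth_add: "smooth_on U f \<Longrightarrow> smooth_on U h \<Longrightarrow> smooth_on U (\<lambda>x. f x + h x)"
  using sg_add smooth_gen_iff[OF U] by blast

lemma smooth_mult: "smooth_on U f \<Longrightarrow> smooth_on U h \<Longrightarrow> smooth_on U (\<lambda>x. f x * h x)"
  using sg_mult smooth_gen_iff[OF U] by blast

lemma smooth_inverse: "smooth_on U f \<Longrightarrow> (\<forall>x\<in>U. f x \<noteq> 0) \<Longrightarrow> smooth_on U (\<lambda>x. inverse (f x))"
  using sg_inverse smooth_gen_iff[OF U] by blast

lemma smooth_cong: "smooth_on U f \<Longrightarrow> (\<forall>x\<in>U. f x = h x) \<Longrightarrow> smooth_on U h"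
  using sg_cong smooth_gen_iff[OF U] by blast

lemma smooth_minus: "smooth_on U f \<Longrightarrow> smooth_on U (\<lambda>x. - f x)"
  using smooth_mult[OF smooth_const[of "-1"]] by simp

lemma smooth_diff: "smooth_on U f \<Longrightarrow> smooth_on U h \<Longrightarrow> smooth_on U (\<lambda>x. f x - h x)"
  using smooth_add[OF _ smooth_minus] by simp

lemma smooth_sum: "finite S \<Longrightarrow> (\<And>i. i \<in> S \<Longrightarrow> smooth_on U (f i)) \<Longrightarrow>
    smooth_on U (\<lambda>x. \<Sum>i\<in>S. f i x)"
  by (induction S rule: finite_induct) (auto intro: smooth_const smooth_add)

lemma smooth_prod: "finite S \<Longrightarrow> (\<And>i. i \<in> S \<Longrightarrow> smooth_on U (f i)) \<Longrightarrow>
    smooth_on U (\<lambda>x. \<Prod>i\<in>S. f i x)"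
  by (induction S rule: finite_induct) (auto intro: smooth_const smooth_mult)

lemma smooth_det:
  fixes M :: "real^'n \<Rightarrow> 'm::finite \<Rightarrow> 'm \<Rightarrow> real"
  assumes "\<And>i j. smooth_on U (\<lambda>y. M y i j)"
  shows "smooth_on U (\<lambda>y. det (\<chi> i j. M y i j))"
  unfolding det_def
  by (auto intro!: smooth_sum smooth_prod smooth_mult smooth_const assms finite_permutations)

end

section \<open>Symmetry of second partial derivatives\<close>

lemma line_pd:
  fixes f :: "real^'n::finite \<Rightarrow> real"
  assumes "f differentiable at (p + s *\<^sub>R axis a 1)"
  shows "((\<lambda>s. f (p + s *\<^sub>R axis a 1)) has_real_derivative pd a f (p + s *\<^sub>R axis a 1)) (at s)"
proof -
  let ?F = "frechet_derivative f (at (p + s *\<^sub>R axis a 1))"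
  have l: "((\<lambda>s. p + s *\<^sub>R axis a 1) has_derivative (\<lambda>s. s *\<^sub>R axis a 1)) (at s)"
    by (auto intro!: derivative_eq_intros)
  have c: "((\<lambda>s. f (p + s *\<^sub>R axis a 1)) has_derivative (\<lambda>t. ?F (t *\<^sub>R axis a 1))) (at s)"
    using has_derivative_compose[OF l has_frechet_derivative[OF assms]] by simp
  have "linear ?F"
    using has_frechet_derivative[OF assms] has_derivative_linear by blast
  then show ?thesis
    unfolding pd_def using has_derivative_imp_has_field_derivative[OF c] linear_scale by fastforce
qed

lemma second_difference_mvt:
  fixes f :: "real^'n::finite \<Rightarrow> real"
  assumes U: "open U" and f: "smooth_on U f" and h: "0 < h"
    and sub: "\<And>s t. 0 \<le> s \<Longrightarrow> s \<le> h \<Longrightarrow> 0 \<le> t \<Longrightarrow> t \<le> h \<Longrightarrow> x + (s *\<^sub>R axis a 1 + t *\<^sub>R axis b 1) \<in> U"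
  shows "\<exists>s t. 0 < s \<and> s < h \<and> 0 < t \<and> t < h \<and>
     f (x + (h *\<^sub>R axis a 1 + h *\<^sub>R axis b 1)) - f (x + h *\<^sub>R axis a 1) - f (x + h *\<^sub>R axis b 1) + f x
       = h * (h * pd b (pd a f) (x + (s *\<^sub>R axis a 1 + t *\<^sub>R axis b 1)))"
proof -
  let ?e = "axis a 1 :: real^'n" and ?d = "axis b 1 :: real^'n"
  define u where "u s = f ((x + h *\<^sub>R ?d) + s *\<^sub>R ?e) - f (x + s *\<^sub>R ?e)" for s
  have du: "DERIV u s :> pd a f ((x + h *\<^sub>R ?d) + s *\<^sub>R ?e) - pd a f (x + s *\<^sub>R ?e)"
    if "0 \<le> s" "s \<le> h" for s
  proof -
    have "(x + h *\<^sub>R ?d) + s *\<^sub>R ?e \<in> U" using sub[of s h] that h by (simp add: algebra_simps)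
    moreover have "x + s *\<^sub>R ?e \<in> U" using sub[of s 0] that h by simp
    ultimately show ?thesis unfolding u_def
      by (intro DERIV_diff line_pd smooth_differentiable[OF U f])
  qed
  obtain \<xi> where xi: "0 < \<xi>" "\<xi> < h"
     and e1: "u h - u 0 = (h - 0) * (pd a f ((x + h *\<^sub>R ?d) + \<xi> *\<^sub>R ?e) - pd a f (x + \<xi> *\<^sub>R ?e))"
    using MVT2[OF h du] by auto
  define w where "w t = pd a f ((x + \<xi> *\<^sub>R ?e) + t *\<^sub>R ?d)" for t
  have dw: "DERIV w t :> pd b (pd a f) ((x + \<xi> *\<^sub>R ?e) + t *\<^sub>R ?d)" if "0 \<le> t" "t \<le> h" for t
  proof -
    have "(x + \<xi> *\<^sub>R ?e) + t *\<^sub>R ?d \<in> U" using sub[of \<xi> t] that xi by (simp add: algebra_simps)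
    then show ?thesis unfolding w_def
      by (intro line_pd smooth_differentiable[OF U smooth_pd[OF f]])
  qed
  obtain \<eta> where eta: "0 < \<eta>" "\<eta> < h"
     and e2: "w h - w 0 = (h - 0) * pd b (pd a f) ((x + \<xi> *\<^sub>R ?e) + \<eta> *\<^sub>R ?d)"
    using MVT2[OF h dw] by auto
  have "f (x + (h *\<^sub>R ?e + h *\<^sub>R ?d)) - f (x + h *\<^sub>R ?e) - f (x + h *\<^sub>R ?d) + f x = u h - u 0"
    unfolding u_def by (simp add: algebra_simps)
  also have "\<dots> = h * (w h - w 0)" using e1 unfolding w_def by (simp add: algebra_simps)
  also have "\<dots> = h * (h * pd b (pd a f) (x + (\<xi> *\<^sub>R ?e + \<eta> *\<^sub>R ?d)))"
    using e2 by (simp add: algebra_simps)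
  finally show ?thesis using xi eta by blast
qed

text \<open>Schwarz's theorem: the second difference quotient is symmetric in the two directions,
  and by the mean value theorem it approximates both mixed partials, which are continuous.\<close>
lemma pd_commute:
  fixes f :: "real^'n::finite \<Rightarrow> real"
  assumes U: "open U" and f: "smooth_on U f" and x: "x \<in> U"
  shows "pd a (pd b f) x = pd b (pd a f) x"
proof (rule ccontr)
  assume ne: "pd a (pd b f) x \<noteq> pd b (pd a f) x"
  let ?q1 = "pd b (pd a f)" and ?q2 = "pd a (pd b f)"
  define \<epsilon> where "\<epsilon> = \<bar>?q1 x - ?q2 x\<bar> / 2"
  have ep: "\<epsilon> > 0" using ne unfolding \<epsilon>_def by auto
  have "isCont ?q1 x" "isCont ?q2 x"
    using smooth_differentiable[OF U smooth_pd[OF smooth_pd[OF f]] x]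
      differentiable_imp_continuous_within by blast+
  then obtain d1 d2 where d1: "d1 > 0" "\<And>y. dist y x < d1 \<Longrightarrow> dist (?q1 y) (?q1 x) < \<epsilon>"
    and d2: "d2 > 0" "\<And>y. dist y x < d2 \<Longrightarrow> dist (?q2 y) (?q2 x) < \<epsilon>"
    using ep unfolding continuous_at_eps_delta by metis
  obtain r where r: "r > 0" "ball x r \<subseteq> U" using U x open_contains_ball by blast
  define h where "h = min r (min d1 d2) / 4"
  have h: "h > 0" "2 * h < r" "2 * h < d1" "2 * h < d2" using r d1 d2 unfolding h_def by auto
  have nrm: "norm (s *\<^sub>R axis i 1 + t *\<^sub>R axis j 1 :: real^'n) \<le> 2 * h"
    if "0 \<le> s" "s \<le> h" "0 \<le> t" "t \<le> h" for s t i j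
  proof -
    have "norm (s *\<^sub>R axis i 1 + t *\<^sub>R axis j 1 :: real^'n)
        \<le> norm (s *\<^sub>R axis i 1 :: real^'n) + norm (t *\<^sub>R axis j 1 :: real^'n)"
      by (rule norm_triangle_ineq)
    also have "\<dots> = \<bar>s\<bar> + \<bar>t\<bar>" by simp
    finally show ?thesis using that by simp
  qed
  have ball_step: "x + v \<in> U" if "norm v < r" for v :: "real^'n"
    using that r by (auto simp: dist_norm)
  have sub: "x + (s *\<^sub>R axis i 1 + t *\<^sub>R axis j 1) \<in> U"
    if "0 \<le> s" "s \<le> h" "0 \<le> t" "t \<le> h" for s t i j
    using ball_step nrm[OF that, of i j] h(2) by force
  obtain s1 t1 where st1: "0 < s1" "s1 < h" "0 < t1" "t1 < h"
    and E1: "f (x + (h *\<^sub>R axis a 1 + h *\<^sub>R axis b 1)) - f (x + h *\<^sub>R axis a 1)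
         - f (x + h *\<^sub>R axis b 1) + f x = h * (h * ?q1 (x + (s1 *\<^sub>R axis a 1 + t1 *\<^sub>R axis b 1)))"
    using second_difference_mvt[OF U f h(1) sub] by blast
  obtain s2 t2 where st2: "0 < s2" "s2 < h" "0 < t2" "t2 < h"
    and E2: "f (x + (h *\<^sub>R axis b 1 + h *\<^sub>R axis a 1)) - f (x + h *\<^sub>R axis b 1)
         - f (x + h *\<^sub>R axis a 1) + f x = h * (h * ?q2 (x + (s2 *\<^sub>R axis b 1 + t2 *\<^sub>R axis a 1)))"
    using second_difference_mvt[OF U f h(1) sub, of b a] by blast
  have eq: "?q1 (x + (s1 *\<^sub>R axis a 1 + t1 *\<^sub>R axis b 1)) = ?q2 (x + (s2 *\<^sub>R axis b 1 + t2 *\<^sub>R axis a 1))"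
    using E1 E2 h by (simp add: algebra_simps)
  have "dist (x + (s1 *\<^sub>R axis a 1 + t1 *\<^sub>R axis b 1)) x < d1"
    "dist (x + (s2 *\<^sub>R axis b 1 + t2 *\<^sub>R axis a 1)) x < d2"
    using nrm[of s1 t1 a b] nrm[of s2 t2 b a] st1 st2 h by (auto simp: dist_norm)
  then have "\<bar>?q1 (x + (s1 *\<^sub>R axis a 1 + t1 *\<^sub>R axis b 1)) - ?q1 x\<bar> < \<epsilon>"
       "\<bar>?q2 (x + (s2 *\<^sub>R axis b 1 + t2 *\<^sub>R axis a 1)) - ?q2 x\<bar> < \<epsilon>"
    using d1 d2 by (auto simp: dist_real_def)
  moreover have "\<bar>u - L1\<bar> < \<bar>L1 - L2\<bar> / 2 \<Longrightarrow> \<bar>w - L2\<bar> < \<bar>L1 - L2\<bar> / 2 \<Longrightarrow> u \<noteq> w"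
    for u w L1 L2 :: real
    by (simp add: abs_if split: if_split_asm)
  ultimately show False using eq unfolding \<epsilon>_def by blast
qed

section \<open>Smoothness of the metric quantities\<close>

lemma rm_open: "riemannian_metric U g \<Longrightarrow> open U"
  unfolding riemannian_metric_def by blast

lemma rm_smooth: "riemannian_metric U g \<Longrightarrow> smooth_on U (\<lambda>y. g y i j)"
  unfolding riemannian_metric_def by blast

lemma rm_sym: "riemannian_metric U g \<Longrightarrow> y \<in> U \<Longrightarrow> g y i j = g y j i"
  unfolding riemannian_metric_def by blast

text \<open>A positive definite matrix has trivial kernel, hence nonzero determinant.\<close>
lemma metric_det_nonzero:
  fixes g :: "real^'n::finite \<Rightarrow> 'n \<Rightarrow> 'n \<Rightarrow> real"
  assumes rm: "riemannian_metric U g" and y: "y \<in> U"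
  shows "det (\<chi> k l. g y k l) \<noteq> 0"
proof -
  let ?G = "(\<chi> k l. g y k l) :: real^'n^'n"
  have ker: "v = 0" if "?G *v v = 0" for v
  proof (rule ccontr)
    assume "v \<noteq> 0"
    then have "(\<Sum>i\<in>UNIV. \<Sum>j\<in>UNIV. g y i j * v$i * v$j) > 0"
      using rm y unfolding riemannian_metric_def by blast
    moreover have "(\<Sum>i\<in>UNIV. \<Sum>j\<in>UNIV. g y i j * v$i * v$j) = (\<Sum>i\<in>UNIV. v$i * (?G *v v)$i)"
      by (simp add: matrix_vector_mult_def sum_distrib_left algebra_simps)
    ultimately show False using that by simp
  qed
  have "inj ((*v) ?G)"
  proof (rule injI)
    fix u w assume "?G *v u = ?G *v w"
    then have "?G *v (u - w) = 0" by (simp add: matrix_vector_mult_diff_distrib)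
    then show "u = w" using ker[of "u - w"] by simp
  qed
  then show ?thesis using det_nz_iff_inj[of "(*v) ?G"] by simp
qed

lemma metric_matrix_inverse:
  fixes g :: "real^'n::finite \<Rightarrow> 'n \<Rightarrow> 'n \<Rightarrow> real"
  assumes rm: "riemannian_metric U g" and y: "y \<in> U"
  shows "(\<chi> k l. g y k l) ** matrix_inv (\<chi> k l. g y k l) = mat 1"
    and "matrix_inv (\<chi> k l. g y k l) ** (\<chi> k l. g y k l) = mat 1"
proof -
  have "invertible ((\<chi> k l. g y k l) :: real^'n^'n)"
    using metric_det_nonzero[OF rm y] invertible_det_nz by blast
  then have "(\<chi> k l. g y k l) ** matrix_inv (\<chi> k l. g y k l) = mat 1
      \<and> matrix_inv (\<chi> k l. g y k l) ** (\<chi> k l. g y k l) = (mat 1 :: real^'n^'n)"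
    unfolding invertible_def matrix_inv_def by (rule someI_ex)
  then show "(\<chi> k l. g y k l) ** matrix_inv (\<chi> k l. g y k l) = mat 1"
    and "matrix_inv (\<chi> k l. g y k l) ** (\<chi> k l. g y k l) = mat 1" by blast+
qed

lemma ginv_right:
  fixes g :: "real^'n::finite \<Rightarrow> 'n \<Rightarrow> 'n \<Rightarrow> real"
  assumes rm: "riemannian_metric U g" and y: "y \<in> U"
  shows "(\<Sum>k\<in>UNIV. g y i k * ginv g y k j) = (if i = j then 1 else 0)"
proof -
  have "((\<chi> k l. g y k l) ** matrix_inv (\<chi> k l. g y k l)) $ i $ j = (mat 1 :: real^'n^'n) $ i $ j"
    using metric_matrix_inverse[OF rm y] by simp
  then show ?thesis unfolding ginv_def by (simp add: matrix_matrix_mult_def mat_def)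
qed

text \<open>Cramer's rule expresses the inverse metric through determinants, whence it is smooth.\<close>
lemma ginv_cramer:
  fixes g :: "real^'n::finite \<Rightarrow> 'n \<Rightarrow> 'n \<Rightarrow> real"
  assumes rm: "riemannian_metric U g" and y: "y \<in> U"
  shows "ginv g y i j = det (\<chi> r s. if s = i then (if r = j then 1 else 0) else g y r s)
                         * inverse (det (\<chi> k l. g y k l))"
proof -
  let ?G = "(\<chi> k l. g y k l) :: real^'n^'n"
  let ?v = "matrix_inv ?G *v axis j 1"
  have "?G *v ?v = axis j 1"
    using metric_matrix_inverse(1)[OF rm y] by (simp add: matrix_vector_mul_assoc)
  then have "?v = (\<chi> k. det(\<chi> r s. if s = k then (axis j 1 :: real^'n)$r else ?G$r$s) / det ?G)"
    using cramer[OF metric_det_nonzero[OF rm y]] by blast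
  then have "?v $ i = det(\<chi> r s. if s = i then (axis j 1 :: real^'n)$r else ?G$r$s) / det ?G" by simp
  moreover have "?v $ i = ginv g y i j"
    unfolding ginv_def by (simp add: matrix_vector_mult_def axis_def if_distrib cong: if_cong)
  moreover have "(\<chi> r s. if s = i then (axis j 1 :: real^'n)$r else ?G$r$s)
      = (\<chi> r s. if s = i then (if r = j then 1 else 0) else g y r s)"
    by (simp add: axis_def vec_eq_iff)
  ultimately show ?thesis by (simp add: divide_inverse)
qed

lemma smooth_ginv:
  fixes g :: "real^'n::finite \<Rightarrow> 'n \<Rightarrow> 'n \<Rightarrow> real"
  assumes rm: "riemannian_metric U g"
  shows "smooth_on U (\<lambda>y. ginv g y i j)"
proof (rule smooth_cong[OF rm_open[OF rm]])
  have "smooth_on U (\<lambda>y. if s = i then (if r = j then 1 else 0) else g y r s)" for r s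
    by (cases "s = i") (simp_all add: smooth_const[OF rm_open[OF rm]] rm_smooth[OF rm])
  then show "smooth_on U (\<lambda>y. det (\<chi> r s. if s = i then (if r = j then 1 else 0) else g y r s)
      * inverse (det (\<chi> k l. g y k l)))"
    using metric_det_nonzero[OF rm] rm_open[OF rm]
    by (intro smooth_mult smooth_inverse smooth_det rm_smooth[OF rm]) auto
  show "\<forall>y\<in>U. det (\<chi> r s. if s = i then (if r = j then 1 else 0) else g y r s)
      * inverse (det (\<chi> k l. g y k l)) = ginv g y i j"
    using ginv_cramer[OF rm] by simp
qed

lemma smooth_Chr: "riemannian_metric U g \<Longrightarrow> smooth_on U (\<lambda>y. Chr g y a b c)"
  unfolding Chr_def
  by (intro smooth_mult smooth_const smooth_sum finite_UNIV smooth_ginv smooth_add smooth_diff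
      smooth_pd rm_open rm_smooth) auto

lemma smooth_Riem: "riemannian_metric U g \<Longrightarrow> smooth_on U (\<lambda>y. Riem g y a b c d)"
  unfolding Riem_def
  by (intro smooth_add smooth_diff smooth_mult smooth_sum finite_UNIV smooth_pd rm_open smooth_Chr) auto

lemma smooth_Ricci: "riemannian_metric U g \<Longrightarrow> smooth_on U (\<lambda>y. Ricci g y a b)"
  unfolding Ricci_def by (intro smooth_sum smooth_Riem rm_open) auto

lemma smooth_scal: "riemannian_metric U g \<Longrightarrow> smooth_on U (scal g)"
  unfolding scal_def[abs_def] by (intro smooth_sum smooth_mult smooth_ginv smooth_Ricci rm_open) auto

lemma Chr_sym:
  assumes rm: "riemannian_metric U g" and y: "y \<in> U"
  shows "Chr g y a b k = Chr g y b a k"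
proof -
  have "pd l (\<lambda>y. g y a b) y = pd l (\<lambda>y. g y b a) y" for l
    by (rule pd_local[OF rm_open[OF rm] y]) (use rm_sym[OF rm] in auto)
  then show ?thesis unfolding Chr_def by (simp add: algebra_simps)
qed

section \<open>Coordinate identities of a torsion-free connection\<close>

text \<open>The following three identities are stated for arbitrary arrays G (Christoffel symbols
  at a point, symmetric in the lower indices) and arrays standing for their partial
  derivatives, so that they are pure finite-sum algebra.\<close>
lemma ricci_identity_coords:
  fixes t :: "'n::finite \<Rightarrow> 'n \<Rightarrow> real" and dt :: "'n \<Rightarrow> 'n \<Rightarrow> 'n \<Rightarrow> real"
    and ddt :: "'n \<Rightarrow> 'n \<Rightarrow> 'n \<Rightarrow> 'n \<Rightarrow> real" and G :: "'n \<Rightarrow> 'n \<Rightarrow> 'n \<Rightarrow> real"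
    and dG :: "'n \<Rightarrow> 'n \<Rightarrow> 'n \<Rightarrow> 'n \<Rightarrow> real"
  assumes Gs: "\<And>a b k. G a b k = G b a k" and ds: "\<And>c a b e. ddt c a b e = ddt a c b e"
  defines "D \<equiv> \<lambda>a b e. dt a b e - (\<Sum>k\<in>UNIV. G a b k * t k e) - (\<Sum>k\<in>UNIV. G a e k * t b k)"
  defines "dD \<equiv> \<lambda>c a b e. ddt c a b e - (\<Sum>k\<in>UNIV. dG c a b k * t k e + G a b k * dt c k e)
                   - (\<Sum>k\<in>UNIV. dG c a e k * t b k + G a e k * dt c b k)"
  defines "C \<equiv> \<lambda>c a b e. dD c a b e - (\<Sum>k\<in>UNIV. G c a k * D k b e) - (\<Sum>k\<in>UNIV. G c b k * D a k e)
                   - (\<Sum>k\<in>UNIV. G c e k * D a b k)"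
  defines "R \<equiv> \<lambda>c a b m. dG c a b m - dG a c b m - (\<Sum>k\<in>UNIV. G c b k * G a k m) + (\<Sum>k\<in>UNIV. G c k m * G a b k)"
  shows "C c a b e - C a c b e = - (\<Sum>m\<in>UNIV. R c a b m * t m e) - (\<Sum>m\<in>UNIV. R c a e m * t b m)"
  unfolding C_def dD_def D_def R_def
  apply (simp add: sum_subtractf sum.distrib sum_distrib_left sum_distrib_right algebra_simps ds)
  apply (simp add: Gs)
  apply (subst (1 2 3 4 5 6) sum.swap)
  apply (simp add: Gs algebra_simps)
  done

lemma second_bianchi_coords:
  fixes G :: "'n::finite \<Rightarrow> 'n \<Rightarrow> 'n \<Rightarrow> real" and dG :: "'n \<Rightarrow> 'n \<Rightarrow> 'n \<Rightarrow> 'n \<Rightarrow> real"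
    and ddG :: "'n \<Rightarrow> 'n \<Rightarrow> 'n \<Rightarrow> 'n \<Rightarrow> 'n \<Rightarrow> real"
  assumes Gs: "\<And>a b k. G a b k = G b a k" and dGs: "\<And>a b c k. dG a b c k = dG a c b k"
    and ds: "\<And>a b c e k. ddG a b c e k = ddG b a c e k"
  defines "R \<equiv> \<lambda>b c e d. dG b c e d - dG c b e d - (\<Sum>k\<in>UNIV. G b e k * G c k d) + (\<Sum>k\<in>UNIV. G b k d * G c e k)"
  defines "dR \<equiv> \<lambda>a b c e d. ddG a b c e d - ddG a c b e d
      - (\<Sum>k\<in>UNIV. dG a b e k * G c k d + G b e k * dG a c k d)
      + (\<Sum>k\<in>UNIV. dG a b k d * G c e k + G b k d * dG a c e k)"
  defines "N \<equiv> \<lambda>a b c e d. dR a b c e d - (\<Sum>k\<in>UNIV. G a b k * R k c e d) - (\<Sum>k\<in>UNIV. G a c k * R b k e d)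
      - (\<Sum>k\<in>UNIV. G a e k * R b c k d) + (\<Sum>k\<in>UNIV. G a k d * R b c e k)"
  shows "N a b c e d + N b c a e d + N c a b e d = 0"
  unfolding N_def dR_def R_def
  apply (simp add: sum_subtractf sum.distrib sum_distrib_left sum_distrib_right algebra_simps ds)
  apply (simp add: Gs dGs algebra_simps)
  apply (subst (1 2 3 4 5 6) sum.swap)
  apply (simp add: Gs algebra_simps)
  done

lemma codazzi_wedge_cyclic_coords:
  fixes p :: "'n::finite \<Rightarrow> 'n \<Rightarrow> real" and dp :: "'n \<Rightarrow> 'n \<Rightarrow> 'n \<Rightarrow> real"
    and dq :: "'n \<Rightarrow> real" and ddq :: "'n \<Rightarrow> 'n \<Rightarrow> real" and G :: "'n \<Rightarrow> 'n \<Rightarrow> 'n \<Rightarrow> real"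
    and P :: "'n \<Rightarrow> 'n \<Rightarrow> 'n \<Rightarrow> real" and C :: real
  assumes Gs: "\<And>a b k. G a b k = G b a k" and ds: "\<And>c b. ddq c b = ddq b c"
    and Ps: "\<And>c a e. P c a e = P a c e"
    and dpP: "\<And>c a e. dp c a e = P c a e + (\<Sum>k\<in>UNIV. G c a k * p k e) + (\<Sum>k\<in>UNIV. G c e k * p a k)"
  defines "h \<equiv> \<lambda>a b e. C * (p a e * dq b - p b e * dq a)"
  defines "dh \<equiv> \<lambda>c a b e. C * (dp c a e * dq b + p a e * ddq c b - (dp c b e * dq a + p b e * ddq c a))"
  defines "H \<equiv> \<lambda>c a b e. dh c a b e - (\<Sum>k\<in>UNIV. G c a k * h k b e) - (\<Sum>k\<in>UNIV. G c b k * h a k e)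
     - (\<Sum>k\<in>UNIV. G c e k * h a b k)"
  shows "H c a b e + H a b c e + H b c a e = 0"
  unfolding H_def dh_def h_def dpP
  apply (simp add: sum_subtractf sum.distrib sum_distrib_left sum_distrib_right algebra_simps)
  apply (simp add: Gs Ps ds algebra_simps)
  done

section \<open>Curvature identities at a point\<close>

definition cov03 :: "(real^'n::finite \<Rightarrow> 'n \<Rightarrow> 'n \<Rightarrow> real) \<Rightarrow> (real^'n \<Rightarrow> 'n \<Rightarrow> 'n \<Rightarrow> 'n \<Rightarrow> real)
     \<Rightarrow> real^'n \<Rightarrow> 'n \<Rightarrow> 'n \<Rightarrow> 'n \<Rightarrow> 'n \<Rightarrow> real" where
  "cov03 g D x c a b e = pd c (\<lambda>y. D y a b e) x
     - (\<Sum>k\<in>UNIV. Chr g x c a k * D x k b e) - (\<Sum>k\<in>UNIV. Chr g x c b k * D x a k e)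
     - (\<Sum>k\<in>UNIV. Chr g x c e k * D x a b k)"

definition ricci_cotton :: "(real^'n::finite \<Rightarrow> 'n \<Rightarrow> 'n \<Rightarrow> real) \<Rightarrow> real^'n \<Rightarrow> 'n \<Rightarrow> 'n \<Rightarrow> 'n \<Rightarrow> real" where
  "ricci_cotton g y a b e = cov02 g (Ricci g) y a b e - cov02 g (Ricci g) y b a e"

definition grad_wedge :: "real \<Rightarrow> (real^'n::finite \<Rightarrow> 'n \<Rightarrow> 'n \<Rightarrow> real) \<Rightarrow> (real^'n \<Rightarrow> real)
     \<Rightarrow> real^'n \<Rightarrow> 'n \<Rightarrow> 'n \<Rightarrow> 'n \<Rightarrow> real" where
  "grad_wedge C p q y a b e = C * (p y a e * pd b q y - p y b e * pd a q y)"

lemma Riem_antisym: "Riem g y a b c d = - Riem g y b a c d"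
  unfolding Riem_def by (simp add: algebra_simps)

context
  fixes U :: "(real^'n::finite) set" and g :: "real^'n \<Rightarrow> 'n \<Rightarrow> 'n \<Rightarrow> real" and x :: "real^'n"
  assumes rm: "riemannian_metric U g" and xU: "x \<in> U"
begin

lemma U_open: "open U" using rm_open[OF rm] .

lemma smooth_differentiable_at [simp]: "smooth_on U f \<Longrightarrow> f differentiable (at x)"
  using smooth_differentiable[OF U_open _ xU] .

lemmas smooth_rules [simp] = smooth_add[OF U_open] smooth_mult[OF U_open] smooth_diff[OF U_open]
  smooth_sum[OF U_open] smooth_minus[OF U_open] smooth_const[OF U_open] smooth_pd
  smooth_Chr[OF rm] smooth_Ricci[OF rm] smooth_Riem[OF rm] rm_smooth[OF rm] smooth_ginv[OF rm]

lemma smooth_cov02: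
  assumes "\<And>i j. smooth_on U (\<lambda>y. T y i j)"
  shows "smooth_on U (\<lambda>y. cov02 g T y a b e)"
  unfolding cov02_def using assms by simp

lemma pd_cov02:
  assumes T: "\<And>i j. smooth_on U (\<lambda>y. T y i j)"
  shows "pd c (\<lambda>y. cov02 g T y a b e) x = pd c (pd a (\<lambda>y. T y b e)) x
     - (\<Sum>k\<in>UNIV. pd c (\<lambda>y. Chr g y a b k) x * T x k e + Chr g x a b k * pd c (\<lambda>y. T y k e) x)
     - (\<Sum>k\<in>UNIV. pd c (\<lambda>y. Chr g y a e k) x * T x b k + Chr g x a e k * pd c (\<lambda>y. T y b k) x)"
  unfolding cov02_def using T by (simp add: pd_rules)

lemma pd_Riem:
  "pd a (\<lambda>y. Riem g y b c e d) x = pd a (pd b (\<lambda>y. Chr g y c e d)) x - pd a (pd c (\<lambda>y. Chr g y b e d)) x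
     - (\<Sum>k\<in>UNIV. pd a (\<lambda>y. Chr g y b e k) x * Chr g x c k d + Chr g x b e k * pd a (\<lambda>y. Chr g y c k d) x)
     + (\<Sum>k\<in>UNIV. pd a (\<lambda>y. Chr g y b k d) x * Chr g x c e k + Chr g x b k d * pd a (\<lambda>y. Chr g y c e k) x)"
  unfolding Riem_def by (simp add: pd_rules)

lemma Chr_sym_at: "Chr g x a b k = Chr g x b a k"
  using Chr_sym[OF rm xU] .

lemma pd_Chr_sym: "pd a (\<lambda>y. Chr g y b c k) x = pd a (\<lambda>y. Chr g y c b k) x"
  by (rule pd_local[OF U_open xU]) (use Chr_sym[OF rm] in auto)

lemma pd_pd_Chr_commute: "pd a (pd b (\<lambda>y. Chr g y c e k)) x = pd b (pd a (\<lambda>y. Chr g y c e k)) x"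
  by (rule pd_commute[OF U_open _ xU]) simp

lemma first_bianchi: "Riem g x a b c d + Riem g x b c a d + Riem g x c a b d = 0"
  unfolding Riem_def by (simp add: Chr_sym_at pd_Chr_sym algebra_simps)

lemma second_bianchi:
  "cov13 g (Riem g) x a b c e d + cov13 g (Riem g) x b c a e d + cov13 g (Riem g) x c a b e d = 0"
  using second_bianchi_coords[where G="\<lambda>a b k. Chr g x a b k"
      and dG="\<lambda>a b c k. pd a (\<lambda>y. Chr g y b c k) x"
      and ddG="\<lambda>a b c e k. pd a (pd b (\<lambda>y. Chr g y c e k)) x", OF Chr_sym_at pd_Chr_sym pd_pd_Chr_commute]
  unfolding cov13_def pd_Riem unfolding Riem_def by simp

lemma cov_Riem_contraction: "(\<Sum>m\<in>UNIV. cov13 g (Riem g) x b c m e m) = cov02 g (Ricci g) x b c e"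
  unfolding cov13_def cov02_def Ricci_def
  apply (simp add: pd_rules sum_subtractf sum.distrib sum_distrib_left sum_distrib_right algebra_simps)
  apply (subst (4 5 6) sum.swap)
  apply simp
  done

lemma cov13_antisym:
  assumes K: "\<And>y a b e d. K y a b e d = - K y b a e d"
    and Ks: "\<And>a b e d. smooth_on U (\<lambda>y. K y a b e d)"
  shows "cov13 g K x c a b e d = - cov13 g K x c b a e d"
proof -
  have eqf: "(\<lambda>y. K y a b e d) = (\<lambda>y. - K y b a e d)" by (rule ext) (rule K)
  have "K x k b e d = - K x b k e d" "K x a k e d = - K x k a e d" "K x a b k d = - K x b a k d"
    "K x a b e k = - K x b a e k" for k by (rule K)+
  then show ?thesis unfolding cov13_def eqf using Ks by (simp add: pd_minus sum_negf)
qed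

lemma contracted_bianchi: "div13 g (Riem g) x b c e = - ricci_cotton g x b c e"
proof -
  have "(\<Sum>m\<in>UNIV. cov13 g (Riem g) x m b c e m + cov13 g (Riem g) x b c m e m
      + cov13 g (Riem g) x c m b e m) = 0"
    using second_bianchi by simp
  moreover have "cov13 g (Riem g) x c m b e m = - cov13 g (Riem g) x c b m e m" for m
    by (rule cov13_antisym) (rule Riem_antisym, simp)
  ultimately show ?thesis
    unfolding div13_def ricci_cotton_def
    using cov_Riem_contraction[of b c e] cov_Riem_contraction[of c b e]
    by (simp add: sum.distrib sum_subtractf)
qed

lemma ricci_identity:
  assumes T: "\<And>i j. smooth_on U (\<lambda>y. T y i j)"
  shows "cov03 g (cov02 g T) x c a b e - cov03 g (cov02 g T) x a c b e
     = - (\<Sum>m\<in>UNIV. Riem g x c a b m * T x m e) - (\<Sum>m\<in>UNIV. Riem g x c a e m * T x b m)"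
proof -
  have ds: "pd c (pd a (\<lambda>y. T y b e)) x = pd a (pd c (\<lambda>y. T y b e)) x" for c a b e
    by (rule pd_commute[OF U_open T xU])
  show ?thesis
    using ricci_identity_coords[where ddt="\<lambda>c a b e. pd c (pd a (\<lambda>y. T y b e)) x"
       and G="\<lambda>a b k. Chr g x a b k" and dt="\<lambda>c b e. pd c (\<lambda>y. T y b e) x" and t="\<lambda>b e. T x b e"
       and dG="\<lambda>c a b k. pd c (\<lambda>y. Chr g y a b k) x", OF Chr_sym_at ds]
    unfolding cov03_def pd_cov02[OF T] unfolding cov02_def Riem_def by simp
qed

lemma Chr_lower: "(\<Sum>k\<in>UNIV. Chr g x a b k * g x k e)
   = 1/2 * (pd a (\<lambda>y. g y b e) x + pd b (\<lambda>y. g y a e) x - pd e (\<lambda>y. g y a b) x)"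
proof -
  have "(\<Sum>k\<in>UNIV. Chr g x a b k * g x k e)
     = (\<Sum>k\<in>UNIV. \<Sum>l\<in>UNIV. 1/2 * (g x e k * ginv g x k l) *
         (pd a (\<lambda>y. g y b l) x + pd b (\<lambda>y. g y a l) x - pd l (\<lambda>y. g y a b) x))"
    unfolding Chr_def using rm_sym[OF rm xU]
    by (simp add: sum_distrib_left sum_distrib_right algebra_simps)
  also have "\<dots> = (\<Sum>l\<in>UNIV. 1/2 * (\<Sum>k\<in>UNIV. g x e k * ginv g x k l) *
         (pd a (\<lambda>y. g y b l) x + pd b (\<lambda>y. g y a l) x - pd l (\<lambda>y. g y a b) x))"
    by (subst sum.swap) (simp add: sum_distrib_left sum_distrib_right)
  also have "\<dots> = (\<Sum>l\<in>UNIV. if e = l then 1/2 *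
         (pd a (\<lambda>y. g y b l) x + pd b (\<lambda>y. g y a l) x - pd l (\<lambda>y. g y a b) x) else 0)"
    by (rule sum.cong) (auto simp: ginv_right[OF rm xU])
  also have "\<dots> = 1/2 * (pd a (\<lambda>y. g y b e) x + pd b (\<lambda>y. g y a e) x - pd e (\<lambda>y. g y a b) x)"
    by simp
  finally show ?thesis .
qed

lemma metric_parallel: "cov02 g g x c a e = 0"
proof -
  have s: "pd l (\<lambda>y. g y i j) x = pd l (\<lambda>y. g y j i) x" for l i j
    by (rule pd_local[OF U_open xU]) (use rm_sym[OF rm] in auto)
  have "(\<Sum>k\<in>UNIV. Chr g x c e k * g x a k) = (\<Sum>k\<in>UNIV. Chr g x c e k * g x k a)"
    using rm_sym[OF rm xU] by simp
  then show ?thesis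
    unfolding cov02_def using Chr_lower[of c a e] Chr_lower[of c e a] s[of c e a] s[of a c e] s[of e c a]
    by (simp add: algebra_simps)
qed

lemma cov03_local:
  assumes "\<And>y a b e. y \<in> U \<Longrightarrow> E y a b e = F y a b e"
  shows "cov03 g E x c a b e = cov03 g F x c a b e"
proof -
  have "pd c (\<lambda>y. E y a b e) x = pd c (\<lambda>y. F y a b e) x"
    by (rule pd_local[OF U_open xU]) (use assms in auto)
  then show ?thesis unfolding cov03_def using assms[OF xU] by simp
qed

lemma cov03_antisymmetrise:
  assumes "\<And>a b e. smooth_on U (\<lambda>y. E y a b e)"
  shows "cov03 g E x c a b e - cov03 g E x c b a e
    = cov03 g (\<lambda>y a b e. E y a b e - E y b a e) x c a b e"
  unfolding cov03_def using assms
  by (simp add: pd_rules sum_subtractf algebra_simps right_diff_distrib)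

lemma grad_wedge_cyclic:
  assumes p: "\<And>i j. smooth_on U (\<lambda>y. p y i j)" and q: "smooth_on U q"
    and cod: "\<And>c a e. cov02 g p x c a e = cov02 g p x a c e"
  shows "cov03 g (grad_wedge C p q) x c a b e + cov03 g (grad_wedge C p q) x a b c e
       + cov03 g (grad_wedge C p q) x b c a e = 0"
proof -
  have ds: "pd c (pd b q) x = pd b (pd c q) x" for c b
    by (rule pd_commute[OF U_open q xU])
  have dpP: "pd c (\<lambda>y. p y a e) x = cov02 g p x c a e + (\<Sum>k\<in>UNIV. Chr g x c a k * p x k e)
      + (\<Sum>k\<in>UNIV. Chr g x c e k * p x a k)" for c a e
    unfolding cov02_def by simp
  have pdh: "pd c (\<lambda>y. grad_wedge C p q y a b e) x
      = C * (pd c (\<lambda>y. p y a e) x * pd b q x + p x a e * pd c (pd b q) x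
      - (pd c (\<lambda>y. p y b e) x * pd a q x + p x b e * pd c (pd a q) x))" for c a b e
    unfolding grad_wedge_def using p q by (simp add: pd_rules algebra_simps)
  show ?thesis
    using codazzi_wedge_cyclic_coords[where G="\<lambda>a b k. Chr g x a b k" and ddq="\<lambda>c b. pd c (pd b q) x"
       and P="\<lambda>c a e. cov02 g p x c a e" and dp="\<lambda>c a e. pd c (\<lambda>y. p y a e) x" and p="\<lambda>a e. p x a e"
       and dq="\<lambda>b. pd b q x" and C=C, OF Chr_sym_at ds cod dpP]
    unfolding cov03_def pdh unfolding grad_wedge_def by simp
qed

text \<open>Step (3): the vanishing of the cyclic sum of \<nabla> of the Cotton tensor is equivalent,
  via the Ricci identity and the first Bianchi identity, to the first curvature identity.\<close>
lemma first_identity: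
  assumes cyc: "\<And>a b c e. cov03 g (ricci_cotton g) x c a b e + cov03 g (ricci_cotton g) x a b c e
      + cov03 g (ricci_cotton g) x b c a e = 0"
  shows "(\<Sum>m\<in>UNIV. Ricci g x a m * Riem g x b c e m) + (\<Sum>m\<in>UNIV. Ricci g x b m * Riem g x c a e m)
       + (\<Sum>m\<in>UNIV. Ricci g x c m * Riem g x a b e m) = 0"
proof -
  define D where "D = cov02 g (Ricci g)"
  have DS: "\<And>a b e. smooth_on U (\<lambda>y. D y a b e)" unfolding D_def by (rule smooth_cov02) simp
  have cotton: "ricci_cotton g = (\<lambda>y a b e. D y a b e - D y b a e)"
    by (simp add: fun_eq_iff ricci_cotton_def D_def)
  note ricci = ricci_identity[where T="Ricci g", OF smooth_Ricci[OF rm], folded D_def]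
  note anti = cov03_antisymmetrise[where E=D, OF DS, folded cotton]
  have bi: "Riem g x c a b m = - Riem g x a b c m - Riem g x b c a m" for m
    using first_bianchi[of a b c m] by linarith
  have b1: "(\<Sum>m\<in>UNIV. Riem g x c a b m * Ricci g x m e) = - (\<Sum>m\<in>UNIV. Riem g x a b c m * Ricci g x m e)
      - (\<Sum>m\<in>UNIV. Riem g x b c a m * Ricci g x m e)"
    by (simp add: bi sum_subtractf sum_negf algebra_simps)
  have cm: "(\<Sum>m\<in>UNIV. Riem g x i j k m * Ricci g x l m) = (\<Sum>m\<in>UNIV. Ricci g x l m * Riem g x i j k m)"
    for i j k l by (simp add: mult.commute)
  show ?thesis
    using ricci[where c=c and a=a and b=b and e=e] ricci[where c=a and a=b and b=c and e=e]
      ricci[where c=b and a=c and b=a and e=e] anti[where c=c and a=a and b=b and e=e]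
      anti[where c=a and a=b and b=c and e=e] anti[where c=b and a=c and b=a and e=e] cyc[of c a b e]
      b1 cm[of c a e b] cm[of a b e c] cm[of b c e a]
    by linarith
qed

lemma ricci_riem_antisym:
  "(\<Sum>m\<in>UNIV. Ricci g x i m * Riem g x j k l m) + (\<Sum>m\<in>UNIV. Ricci g x i m * Riem g x k j l m) = 0"
  by (simp add: Riem_antisym[of g x k j] sum_negf)

lemma ricci_riem_bianchi: "(\<Sum>m\<in>UNIV. Ricci g x i m * Riem g x j k l m)
   + (\<Sum>m\<in>UNIV. Ricci g x i m * Riem g x k l j m) + (\<Sum>m\<in>UNIV. Ricci g x i m * Riem g x l j k m) = 0"
proof -
  have "(\<Sum>m\<in>UNIV. Ricci g x i m * Riem g x j k l m) + (\<Sum>m\<in>UNIV. Ricci g x i m * Riem g x k l j m)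
      + (\<Sum>m\<in>UNIV. Ricci g x i m * Riem g x l j k m)
     = (\<Sum>m\<in>UNIV. Ricci g x i m * (Riem g x j k l m + Riem g x k l j m + Riem g x l j k m))"
    by (simp add: sum.distrib distrib_left)
  then show ?thesis by (simp add: first_bianchi)
qed

text \<open>Step (4): the second identity follows from the first by the algebraic symmetries of R.\<close>
lemma second_identity:
  assumes first: "\<And>a b c e. (\<Sum>m\<in>UNIV. Ricci g x a m * Riem g x b c e m)
       + (\<Sum>m\<in>UNIV. Ricci g x b m * Riem g x c a e m) + (\<Sum>m\<in>UNIV. Ricci g x c m * Riem g x a b e m) = 0"
  shows "(\<Sum>m\<in>UNIV. Ricci g x a m * Riem g x b e c m) - (\<Sum>m\<in>UNIV. Ricci g x b m * Riem g x a c e m)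
       + (\<Sum>m\<in>UNIV. Ricci g x c m * Riem g x e b a m) - (\<Sum>m\<in>UNIV. Ricci g x e m * Riem g x c a b m) = 0"
  using ricci_riem_antisym[of a b e c] ricci_riem_antisym[of b a c e] ricci_riem_antisym[of c b e a]
    ricci_riem_antisym[of e a c b] ricci_riem_bianchi[of a b c e] ricci_riem_bianchi[of c a b e]
    first[of a b c e] first[of a c e b] by linarith

end

lemma cotton_nearly_conformally_symmetric:
  fixes g :: "real^'n::finite \<Rightarrow> 'n \<Rightarrow> 'n \<Rightarrow> real"
  assumes "nearly_conformally_symmetric U g" and "y \<in> U"
  shows "ricci_cotton g y a b e = grad_wedge (- 1 / (2 * (real CARD('n) - 1))) g (scal g) y a b e"
  using assms unfolding nearly_conformally_symmetric_def ricci_cotton_def grad_wedge_def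
  by (simp add: algebra_simps)

text \<open>Step (1) under hypothesis (ii), via the contracted second Bianchi identity.\<close>
lemma cotton_divergence_free:
  assumes rm: "riemannian_metric U g" and y: "y \<in> U" and A: "A \<noteq> 0"
    and div_eq: "div13 g K y a b e = A * div13 g (Riem g) y a b e + B * (t y a e * pd b \<phi> y - t y b e * pd a \<phi> y)"
    and div_zero: "div13 g K y a b e = 0"
  shows "ricci_cotton g y a b e = grad_wedge (B / A) t \<phi> y a b e"
proof -
  have "A * ricci_cotton g y a b e = B * (t y a e * pd b \<phi> y - t y b e * pd a \<phi> y)"
    using div_eq div_zero contracted_bianchi[OF rm y, of a b e] by simp
  then show ?thesis unfolding grad_wedge_def using A by (simp add: field_simps)
qed

definition ricci_riem_identities :: "(real^'n::finite \<Rightarrow> 'n \<Rightarrow> 'n \<Rightarrow> real) \<Rightarrow> real^'n \<Rightarrow> bool" where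
  "ricci_riem_identities g x \<longleftrightarrow> (\<forall>a b c e.
     (\<Sum>m\<in>UNIV. Ricci g x a m * Riem g x b c e m) + (\<Sum>m\<in>UNIV. Ricci g x b m * Riem g x c a e m)
       + (\<Sum>m\<in>UNIV. Ricci g x c m * Riem g x a b e m) = 0
   \<and> (\<Sum>m\<in>UNIV. Ricci g x a m * Riem g x b e c m) - (\<Sum>m\<in>UNIV. Ricci g x b m * Riem g x a c e m)
       + (\<Sum>m\<in>UNIV. Ricci g x c m * Riem g x e b a m) - (\<Sum>m\<in>UNIV. Ricci g x e m * Riem g x c a b m) = 0)"

lemma identities_of_grad_wedge:
  assumes rm: "riemannian_metric U g"
    and p: "\<And>i j. smooth_on U (\<lambda>y. p y i j)" and q: "smooth_on U q"
    and cod: "\<And>y c a e. y \<in> U \<Longrightarrow> cov02 g p y c a e = cov02 g p y a c e"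
    and cotton: "\<And>y a b e. y \<in> U \<Longrightarrow> ricci_cotton g y a b e = grad_wedge C p q y a b e"
    and x: "x \<in> U"
  shows "ricci_riem_identities g x"
proof -
  have "cov03 g (ricci_cotton g) x c a b e + cov03 g (ricci_cotton g) x a b c e
      + cov03 g (ricci_cotton g) x b c a e = 0" for a b c e
    using grad_wedge_cyclic[OF rm x p q cod[OF x]] cov03_local[OF rm x cotton] by simp
  then have first: "(\<Sum>m\<in>UNIV. Ricci g x a m * Riem g x b c e m)
      + (\<Sum>m\<in>UNIV. Ricci g x b m * Riem g x c a e m) + (\<Sum>m\<in>UNIV. Ricci g x c m * Riem g x a b e m) = 0"
    for a b c e by (rule first_identity[OF rm x])
  then show ?thesis
    unfolding ricci_riem_identities_def using second_identity[OF rm x first] by blast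
qed

theorem mainTheorem7:
  fixes U :: "(real^'n::finite) set" and g :: "real^'n \<Rightarrow> 'n \<Rightarrow> 'n \<Rightarrow> real"
  assumes "riemannian_metric U g"
    and "nearly_conformally_symmetric U g \<or>
         (\<exists>(K :: real^'n \<Rightarrow> 'n \<Rightarrow> 'n \<Rightarrow> 'n \<Rightarrow> 'n \<Rightarrow> real) (A::real) (B::real)
             (\<phi> :: real^'n \<Rightarrow> real) (t :: real^'n \<Rightarrow> 'n \<Rightarrow> 'n \<Rightarrow> real).
            (\<forall>b c e d. smooth_on U (\<lambda>x. K x b c e d)) \<and> A \<noteq> 0 \<and> B \<noteq> 0 \<and>
            smooth_on U \<phi> \<and> codazzi U g t \<and>
            (\<forall>x\<in>U. \<forall>b c e. div13 g K x b c e
                 = A * div13 g (Riem g) x b c e + B * (t x b e * pd c \<phi> x - t x c e * pd b \<phi> x)) \<and>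
            (\<forall>x\<in>U. \<forall>b c e. div13 g K x b c e = 0))"
  shows "\<forall>x\<in>U. \<forall>a b c e.
     (\<Sum>m\<in>UNIV. Ricci g x a m * Riem g x b c e m) + (\<Sum>m\<in>UNIV. Ricci g x b m * Riem g x c a e m)
       + (\<Sum>m\<in>UNIV. Ricci g x c m * Riem g x a b e m) = 0
   \<and> (\<Sum>m\<in>UNIV. Ricci g x a m * Riem g x b e c m) - (\<Sum>m\<in>UNIV. Ricci g x b m * Riem g x a c e m)
       + (\<Sum>m\<in>UNIV. Ricci g x c m * Riem g x e b a m) - (\<Sum>m\<in>UNIV. Ricci g x e m * Riem g x c a b m) = 0"
proof -
  note rm = assms(1)
  have "ricci_riem_identities g x" if x: "x \<in> U" for x
    using assms(2)
  proof (elim disjE exE conjE)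
    assume ncs: "nearly_conformally_symmetric U g"
    show ?thesis
      by (intro identities_of_grad_wedge[OF rm rm_smooth[OF rm] smooth_scal[OF rm] _ _ x,
            where C="- 1 / (2 * (real CARD('n) - 1))"])
        (simp_all add: metric_parallel[OF rm] cotton_nearly_conformally_symmetric[OF ncs])
  next
    fix K A B \<phi> t
    assume A: "A \<noteq> 0" and \<phi>: "smooth_on U \<phi>" and t: "codazzi U g t"
      and div_eq: "\<forall>y\<in>U. \<forall>b c e. div13 g K y b c e
          = A * div13 g (Riem g) y b c e + B * (t y b e * pd c \<phi> y - t y c e * pd b \<phi> y)"
      and div_zero: "\<forall>y\<in>U. \<forall>b c e. div13 g K y b c e = 0"
    show ?thesis
    proof (rule identities_of_grad_wedge[OF rm _ \<phi> _ _ x, where p=t and C="B / A"])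
      show "smooth_on U (\<lambda>y. t y i j)" for i j
        using t unfolding codazzi_def by blast
      show "cov02 g t y c a e = cov02 g t y a c e" if "y \<in> U" for y c a e
        using t that unfolding codazzi_def by blast
      show "ricci_cotton g y a b e = grad_wedge (B / A) t \<phi> y a b e" if y: "y \<in> U" for y a b e
        using cotton_divergence_free[where t=t and \<phi>=\<phi>, OF rm y A div_eq[rule_format, OF y, of a b e] div_zero[rule_format, OF y, of a b e]] .
    qed
  qed
  then show ?thesis unfolding ricci_riem_identities_def by blast
qed

end
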